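(* For every $a,\lambda>0$ and $c<1$, the function $$z\mapsto\frac{\Psi(a,c-2\lambda,z)\,\Psi(a+2\lambda,c,z)}{\left(\Psi(a+\lambda,c-\lambda,z)\right)^2}$$ is decreasing on $(0,\infty)$. In particular, for every $z>0$, $$1<\frac{\Psi(a,c-2\lambda,z)\,\Psi(a+2\lambda,c,z)}{\left(\Psi(a+\lambda,c-\lambda,z)\right)^2}<\frac{\Gamma(1-c)\,\Gamma(1-c+2\lambda)}{\Gamma(1-c+\lambda)^2}.$$
   Context: For $a>0$, real $c$ and $z>0$, $\Psi(a,c,z)=\frac{1}{\Gamma(a)}\int_0^\infty e^{-zt}t^{a-1}(1+t)^{c-a-1}\,dt$ is the confluent hypergeometric function of the second kind. *)

theory Defs
  imports "HOL-Analysis.Analysis"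
begin

text \<open>Confluent hypergeometric function of the second kind (Tricomi), via its
  integral representation, valid for a > 0, real c, z > 0:
  Psi(a,c,z) = 1/Gamma(a) * integral over (0,inf) of e^(-zt) t^(a-1) (1+t)^(c-a-1) dt.\<close>
definition Psi :: "real \<Rightarrow> real \<Rightarrow> real \<Rightarrow> real" where
  "Psi a c z = (1 / Gamma a) *
     (LBINT t:{0<..}. exp (- z * t) * t powr (a - 1) * (1 + t) powr (c - a - 1))"

end

theory Submission
  imports Defs
begin

text \<open>
  The three Tricomi functions in the ratio share the exponent \<open>b = c - a - 2l - 1\<close> of \<open>1 + t\<close>.
  Fubini and the Gamma integral turn the defining Laplace integral into the Stieltjes form
  \<open>Psi p c z = M(p) / Gamma g\<close> with \<open>M(p) = \<integral> x\<^bsup>g-1\<^esup> e\<^sup>-\<^sup>x (x + z)\<^bsup>-p\<^esup> dx\<close> and the common value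
  \<open>g = p + 1 - c = a + 2l + 1 - c\<close>. There the ratio is \<open>M(a) M(a + 2l) / M(a + l)\<^sup>2\<close>: it is at
  least 1 by Cauchy-Schwarz, and at \<open>z = 0\<close> it is the quotient of Gamma values.

  For the monotonicity, each product of two Laplace integrals is a double integral over the
  quadrant. In the coordinates \<open>\<sigma> = s + t\<close>, \<open>r = s / t\<close> both products become integrals against
  one density \<open>e\<^bsup>-z\<sigma>\<^esup> K(\<sigma>, q(r))\<close> times a fixed weight, the numerator with the extra factor
  \<open>C(r) = cosh (l ln r)\<close>. The kernels \<open>e\<^bsup>-z\<sigma>\<^esup>\<close> and \<open>K\<close> are reverse rule of order 2 and \<open>C\<close>
  decreases in \<open>q\<close>, so a symmetrisation in four variables shows that this average of \<open>C\<close>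
  strictly decreases in \<open>z\<close>. Then \<open>R z > R (z + 1) \<ge> 1\<close> and \<open>R z < R 0\<close>.
\<close>

section \<open>Iterated integrals over the plane and over four-space\<close>

definition borel_measurable2 :: "(real \<Rightarrow> real \<Rightarrow> real) \<Rightarrow> bool" where
  "borel_measurable2 f \<longleftrightarrow> (\<lambda>x. f (fst x) (snd x)) \<in> borel_measurable borel"

definition borel_measurable4 :: "(real \<Rightarrow> real \<Rightarrow> real \<Rightarrow> real \<Rightarrow> real) \<Rightarrow> bool" where
  "borel_measurable4 T \<longleftrightarrow>
     (\<lambda>x. T (fst x) (fst (snd x)) (fst (snd (snd x))) (snd (snd (snd x)))) \<in> borel_measurable borel"

lemma borel_measurable2_compose:
  assumes "borel_measurable2 f" "f1 \<in> borel_measurable M" "f2 \<in> borel_measurable M"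
  shows "(\<lambda>x. f (f1 x) (f2 x)) \<in> borel_measurable M"
proof -
  have "(\<lambda>x. (f1 x, f2 x)) \<in> M \<rightarrow>\<^sub>M borel"
    unfolding borel_prod[symmetric] using assms(2,3) by measurable
  from measurable_compose[OF this assms(1)[unfolded borel_measurable2_def]] show ?thesis
    by simp
qed

lemma borel_measurable4_compose:
  assumes "borel_measurable4 T" "f1 \<in> borel_measurable M" "f2 \<in> borel_measurable M"
    "f3 \<in> borel_measurable M" "f4 \<in> borel_measurable M"
  shows "(\<lambda>x. T (f1 x) (f2 x) (f3 x) (f4 x)) \<in> borel_measurable M"
proof -
  have "(\<lambda>x. (f1 x, f2 x, f3 x, f4 x)) \<in> M \<rightarrow>\<^sub>M borel"
    unfolding borel_prod[symmetric] using assms(2-5) by measurable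
  from measurable_compose[OF this assms(1)[unfolded borel_measurable4_def]] show ?thesis
    by simp
qed

lemma borel_measurable4_swap:
  assumes "borel_measurable4 T"
  shows "borel_measurable4 (\<lambda>s r s' r'. T s r' s' r)" "borel_measurable4 (\<lambda>s r s' r'. T s' r s r')"
  unfolding borel_measurable4_def
  by (rule borel_measurable4_compose[OF assms]; simp add: borel_prod[symmetric])+

lemma nn_integral_lborel_swap:
  fixes h :: "real \<Rightarrow> real \<Rightarrow> ennreal"
  assumes "(\<lambda>x. h (fst x) (snd x)) \<in> borel_measurable (borel \<Otimes>\<^sub>M borel)"
  shows "(\<integral>\<^sup>+x. \<integral>\<^sup>+y. h x y \<partial>lborel \<partial>lborel) = (\<integral>\<^sup>+x. \<integral>\<^sup>+y. h y x \<partial>lborel \<partial>lborel)"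
proof -
  have "(\<lambda>x. h (fst x) (snd x)) \<in> borel_measurable (lborel \<Otimes>\<^sub>M lborel)"
    using assms
    by (subst measurable_cong_sets[OF sets_pair_measure_cong[OF sets_lborel sets_lborel] refl])
  then show ?thesis
    using lborel_pair.Fubini'[of h] by (simp add: case_prod_unfold)
qed

lemma nn_integral_pos_of_interval:
  fixes f :: "real \<Rightarrow> ennreal"
  assumes [measurable]: "f \<in> borel_measurable borel"
    and "a < b" and pos: "\<And>x. a < x \<Longrightarrow> x < b \<Longrightarrow> 0 < f x"
  shows "0 < (\<integral>\<^sup>+x. f x \<partial>lborel)"
proof (rule ccontr)
  assume "\<not> 0 < (\<integral>\<^sup>+x. f x \<partial>lborel)"
  then have "AE x in lborel. f x = 0"
    by (simp add: nn_integral_0_iff_AE zero_less_iff_neq_zero)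
  then have "emeasure lborel {x \<in> space lborel. f x \<noteq> 0} = 0"
    by (subst (asm) AE_iff_measurable[OF _ refl]) auto
  moreover have "emeasure lborel {a<..<b} \<le> emeasure lborel {x \<in> space lborel. f x \<noteq> 0}"
    using pos by (intro emeasure_mono) force+
  ultimately show False
    using \<open>a < b\<close> by simp
qed

lemma nn_integral_lborel_scale:
  fixes f :: "real \<Rightarrow> real"
  assumes [measurable]: "f \<in> borel_measurable borel" and "\<And>x. f x \<ge> 0" "c > 0"
  shows "(\<integral>\<^sup>+x. ennreal (f x) \<partial>lborel) = (\<integral>\<^sup>+x. ennreal (c * f (c * x)) \<partial>lborel)"
proof -
  have "(\<integral>\<^sup>+x. ennreal (f x) \<partial>lborel) = ennreal c * (\<integral>\<^sup>+x. ennreal (f (0 + c * x)) \<partial>lborel)"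
    using nn_integral_real_affine[of "\<lambda>x. ennreal (f x)" c 0] \<open>c > 0\<close> by simp
  also have "\<dots> = (\<integral>\<^sup>+x. ennreal (c * f (c * x)) \<partial>lborel)"
    using assms by (subst nn_integral_cmult[symmetric]) (auto simp: ennreal_mult)
  finally show ?thesis .
qed

definition nn_integral2 :: "(real \<Rightarrow> real \<Rightarrow> real) \<Rightarrow> ennreal" where
  "nn_integral2 f = (\<integral>\<^sup>+r. \<integral>\<^sup>+s. ennreal (f s r) \<partial>lborel \<partial>lborel)"

definition nn_integral4 :: "(real \<Rightarrow> real \<Rightarrow> real \<Rightarrow> real \<Rightarrow> real) \<Rightarrow> ennreal" where
  "nn_integral4 T =
     (\<integral>\<^sup>+r. \<integral>\<^sup>+r'. \<integral>\<^sup>+s. \<integral>\<^sup>+s'. ennreal (T s r s' r') \<partial>lborel \<partial>lborel \<partial>lborel \<partial>lborel)"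

lemma nn_integral4_add:
  assumes "borel_measurable4 T1" "borel_measurable4 T2"
    and nonneg: "\<And>s r s' r'. T1 s r s' r' \<ge> 0" "\<And>s r s' r'. T2 s r s' r' \<ge> 0"
  shows "nn_integral4 (\<lambda>s r s' r'. T1 s r s' r' + T2 s r s' r') = nn_integral4 T1 + nn_integral4 T2"
proof -
  note [measurable (raw)] = assms(1,2)[THEN borel_measurable4_compose]
  show ?thesis
    unfolding nn_integral4_def ennreal_plus[OF nonneg]
    by (subst nn_integral_add, measurable)+
qed

lemma nn_integral4_mult:
  assumes "borel_measurable2 f" "borel_measurable2 g"
    and "\<And>s r. f s r \<ge> 0" "\<And>s r. g s r \<ge> 0"
  shows "nn_integral4 (\<lambda>s r s' r'. f s r * g s' r') = nn_integral2 f * nn_integral2 g"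
proof -
  note [measurable (raw)] = assms(1,2)[THEN borel_measurable2_compose]
  show ?thesis
    unfolding nn_integral4_def nn_integral2_def
    by (simp add: ennreal_mult assms(3,4) nn_integral_cmult nn_integral_multc)
qed

lemma nn_integral4_swap:
  assumes "borel_measurable4 T"
  shows "nn_integral4 (\<lambda>s r s' r'. T s r' s' r) = nn_integral4 T"
    and "nn_integral4 (\<lambda>s r s' r'. T s' r s r') = nn_integral4 T"
proof -
  note [measurable (raw)] = assms[THEN borel_measurable4_compose]
  show "nn_integral4 (\<lambda>s r s' r'. T s r' s' r) = nn_integral4 T"
    unfolding nn_integral4_def by (rule nn_integral_lborel_swap[symmetric]) measurable
  show "nn_integral4 (\<lambda>s r s' r'. T s' r s r') = nn_integral4 T"
    unfolding nn_integral4_def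
    by (intro nn_integral_cong nn_integral_lborel_swap[symmetric]) measurable
qed

lemma nn_integral4_strict_mono:
  assumes "borel_measurable4 T1" "borel_measurable4 T2"
    and nonneg: "\<And>s r s' r'. T1 s r s' r' \<ge> 0"
    and le: "\<And>s r s' r'. T1 s r s' r' \<le> T2 s r s' r'"
    and less: "\<And>s r s' r'. s \<in> {sa<..<sb} \<Longrightarrow> r \<in> {ra<..<rb} \<Longrightarrow> s' \<in> {sa'<..<sb'} \<Longrightarrow>
      r' \<in> {ra'<..<rb'} \<Longrightarrow> T1 s r s' r' < T2 s r s' r'"
    and "sa < sb" "ra < rb" "sa' < sb'" "ra' < rb'"
    and finite: "nn_integral4 T1 \<noteq> \<infinity>"
  shows "nn_integral4 T1 < nn_integral4 T2"
proof -
  define D where "D s r s' r' = T2 s r s' r' - T1 s r s' r'" for s r s' r'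
  have "borel_measurable4 D"
    using assms(1,2) unfolding borel_measurable4_def D_def by measurable
  note [measurable (raw)] = this[THEN borel_measurable4_compose]
  have "nn_integral4 T2 = nn_integral4 (\<lambda>s r s' r'. T1 s r s' r' + D s r s' r')"
    by (simp add: D_def)
  also have "\<dots> = nn_integral4 T1 + nn_integral4 D"
    using le by (intro nn_integral4_add assms(1) \<open>borel_measurable4 D\<close> nonneg) (simp add: D_def)
  finally have T2_eq: "nn_integral4 T2 = nn_integral4 T1 + nn_integral4 D" .
  have "0 < nn_integral4 D"
    unfolding nn_integral4_def
    by (rule nn_integral_pos_of_interval[OF _ \<open>ra < rb\<close>], measurable,
        rule nn_integral_pos_of_interval[OF _ \<open>ra' < rb'\<close>], measurable,
        rule nn_integral_pos_of_interval[OF _ \<open>sa < sb\<close>], measurable,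
        rule nn_integral_pos_of_interval[OF _ \<open>sa' < sb'\<close>], measurable)
       (use less in \<open>simp add: D_def\<close>)
  then show ?thesis
    using finite unfolding T2_eq
    by (metis add.right_neutral ennreal_add_left_cancel_less)
qed

definition symmetrize4 ::
    "(real \<Rightarrow> real \<Rightarrow> real) \<Rightarrow> (real \<Rightarrow> real \<Rightarrow> real) \<Rightarrow> real \<Rightarrow> real \<Rightarrow> real \<Rightarrow> real \<Rightarrow> real" where
  "symmetrize4 f g =
     (\<lambda>s r s' r'. f s r * g s' r' + f s' r' * g s r + f s r' * g s' r + f s' r * g s r')"

lemma nn_integral4_symmetrize4:
  assumes "borel_measurable2 f" "borel_measurable2 g"
    and nonneg: "\<And>s r. f s r \<ge> 0" "\<And>s r. g s r \<ge> 0"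
  shows "nn_integral4 (symmetrize4 f g) = 4 * (nn_integral2 f * nn_integral2 g)"
proof -
  note [measurable (raw)] = assms(1,2)[THEN borel_measurable2_compose]
  define T where "T s r s' r' = f s r * g s' r'" for s r s' r'
  have T: "borel_measurable4 T"
    unfolding borel_measurable4_def T_def borel_prod[symmetric] by measurable
  have T_nonneg: "T s r s' r' \<ge> 0" for s r s' r'
    unfolding T_def using nonneg by simp
  have swap_both: "nn_integral4 (\<lambda>s r s' r'. T s' r' s r) = nn_integral4 T"
    using nn_integral4_swap(1)[OF borel_measurable4_swap(2)[OF T]] nn_integral4_swap(2)[OF T]
    by simp
  have "nn_integral4 (symmetrize4 f g) = nn_integral4
      (\<lambda>s r s' r'. T s r s' r' + T s' r' s r + T s r' s' r + T s' r s r')"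
    by (simp add: symmetrize4_def T_def)
  also have "\<dots> = nn_integral4 T + nn_integral4 (\<lambda>s r s' r'. T s' r' s r)
      + nn_integral4 (\<lambda>s r s' r'. T s r' s' r) + nn_integral4 (\<lambda>s r s' r'. T s' r s r')"
    by (subst nn_integral4_add,
        unfold borel_measurable4_def T_def borel_prod[symmetric], measurable, measurable,
        (intro add_nonneg_nonneg mult_nonneg_nonneg nonneg)+)+
       (rule refl)
  also have "\<dots> = 4 * nn_integral4 T"
  proof -
    have "(4::ennreal) = 1 + 1 + 1 + 1"
      by simp
    then show ?thesis
      unfolding swap_both nn_integral4_swap[OF T] by (simp only: distrib_right mult_1)
  qed
  also have "nn_integral4 T = nn_integral2 f * nn_integral2 g"
    unfolding T_def by (rule nn_integral4_mult[OF assms])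
  finally show ?thesis .
qed

lemma nn_integral2_mult_less_by_symmetrization:
  assumes meas: "borel_measurable2 f1" "borel_measurable2 g1" "borel_measurable2 f2" "borel_measurable2 g2"
    and nonneg: "\<And>s r. f1 s r \<ge> 0" "\<And>s r. g1 s r \<ge> 0" "\<And>s r. f2 s r \<ge> 0" "\<And>s r. g2 s r \<ge> 0"
    and le: "\<And>s r s' r'. symmetrize4 f1 g1 s r s' r' \<le> symmetrize4 f2 g2 s r s' r'"
    and less: "\<And>s r s' r'. s \<in> {sa<..<sb} \<Longrightarrow> r \<in> {ra<..<rb} \<Longrightarrow> s' \<in> {sa'<..<sb'} \<Longrightarrow>
      r' \<in> {ra'<..<rb'} \<Longrightarrow> symmetrize4 f1 g1 s r s' r' < symmetrize4 f2 g2 s r s' r'"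
    and box: "sa < sb" "ra < rb" "sa' < sb'" "ra' < rb'"
    and finite: "nn_integral2 f1 * nn_integral2 g1 \<noteq> \<infinity>"
  shows "nn_integral2 f1 * nn_integral2 g1 < nn_integral2 f2 * nn_integral2 g2"
proof -
  note [measurable (raw)] = meas[THEN borel_measurable2_compose]
  have "nn_integral4 (symmetrize4 f1 g1) < nn_integral4 (symmetrize4 f2 g2)"
  proof (rule nn_integral4_strict_mono[where sa=sa and sb=sb and ra=ra and rb=rb
        and sa'=sa' and sb'=sb' and ra'=ra' and rb'=rb', OF _ _ _ le])
    show "borel_measurable4 (symmetrize4 f1 g1)" "borel_measurable4 (symmetrize4 f2 g2)"
      unfolding borel_measurable4_def symmetrize4_def borel_prod[symmetric] by measurable measurable
    show "symmetrize4 f1 g1 s r s' r' \<ge> 0" for s r s' r'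
      unfolding symmetrize4_def using nonneg by simp
    show "nn_integral4 (symmetrize4 f1 g1) \<noteq> \<infinity>"
      unfolding nn_integral4_symmetrize4[OF meas(1,2) nonneg(1,2)]
      using finite by (simp add: ennreal_mult_eq_top_iff)
  qed (fact less box)+
  then show ?thesis
    unfolding nn_integral4_symmetrize4[OF meas(1,2) nonneg(1,2)]
      nn_integral4_symmetrize4[OF meas(3,4) nonneg(3,4)]
    by (meson linorder_not_le mult_left_mono zero_le leD)
qed

section \<open>Two integral representations of \<open>Psi\<close>\<close>

definition Psi_kernel :: "real \<Rightarrow> real \<Rightarrow> real \<Rightarrow> real \<Rightarrow> real" where
  "Psi_kernel p b z t = indicator {0<..} t * (exp (- z * t) * t powr (p - 1) * (1 + t) powr b)"

definition Psi_laplace :: "real \<Rightarrow> real \<Rightarrow> real \<Rightarrow> ennreal" where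
  "Psi_laplace p b z = (\<integral>\<^sup>+t. ennreal (Psi_kernel p b z t) \<partial>lborel)"

definition Psi_stieltjes :: "real \<Rightarrow> real \<Rightarrow> real \<Rightarrow> ennreal" where
  "Psi_stieltjes p g z =
     (\<integral>\<^sup>+x. ennreal (indicator {0<..} x * x powr (g - 1) * exp (- x) * (x + z) powr (- p)) \<partial>lborel)"

lemma Psi_kernel_measurable [measurable]: "Psi_kernel p b z \<in> borel_measurable borel"
  unfolding Psi_kernel_def by measurable

lemma Psi_kernel_nonneg: "Psi_kernel p b z t \<ge> 0"
  by (simp add: Psi_kernel_def)

lemma Psi_eq_Psi_laplace: "Psi p c z = enn2real (Psi_laplace p (c - p - 1) z) / Gamma p"
proof -
  have "(LBINT t:{0<..}. exp (- z * t) * t powr (p - 1) * (1 + t) powr (c - p - 1))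
      = enn2real (Psi_laplace p (c - p - 1) z)"
    unfolding set_lebesgue_integral_def Psi_laplace_def Psi_kernel_def
    by (subst integral_eq_nn_integral) (auto simp: indicator_def)
  then show ?thesis
    by (simp add: Psi_def)
qed

lemma nn_integral_Gamma_scaled:
  fixes s y :: real
  assumes "s > 0" "y > 0"
  shows "(\<integral>\<^sup>+x. ennreal (indicator {0<..} x * x powr (s - 1) * exp (- (y * x))) \<partial>lborel)
      = ennreal (Gamma s * y powr (- s))"
proof -
  let ?f = "\<lambda>t. indicator {0..} t * t powr (s - 1) / exp t"
  have "ennreal (Gamma s) = (\<integral>\<^sup>+x. ennreal (y * ?f (y * x)) \<partial>lborel)"
    using Gamma_conv_nn_integral_real[OF \<open>s > 0\<close>] nn_integral_lborel_scale[of ?f y] \<open>y > 0\<close> by simp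
  also have "\<dots> = (\<integral>\<^sup>+x. ennreal (y powr s)
      * ennreal (indicator {0<..} x * x powr (s - 1) * exp (- (y * x))) \<partial>lborel)"
  proof (intro nn_integral_cong)
    fix x :: real
    have "y * (y * x) powr (s - 1) = y powr s * x powr (s - 1)" if "x > 0"
      using that \<open>y > 0\<close> by (simp add: powr_mult powr_diff field_simps)
    then show "ennreal (y * ?f (y * x))
        = ennreal (y powr s) * ennreal (indicator {0<..} x * x powr (s - 1) * exp (- (y * x)))"
      using \<open>y > 0\<close>
      by (cases x "0 :: real" rule: linorder_cases)
         (auto simp: ennreal_mult[symmetric] exp_minus field_simps indicator_def zero_le_mult_iff)
  qed
  also have "\<dots> = ennreal (y powr s)
      * (\<integral>\<^sup>+x. ennreal (indicator {0<..} x * x powr (s - 1) * exp (- (y * x))) \<partial>lborel)"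
    by (rule nn_integral_cmult) measurable
  finally have "ennreal (y powr (- s)) * ennreal (Gamma s)
      = ennreal (y powr (- s) * y powr s)
        * (\<integral>\<^sup>+x. ennreal (indicator {0<..} x * x powr (s - 1) * exp (- (y * x))) \<partial>lborel)"
    using \<open>y > 0\<close> by (simp add: ennreal_mult mult.assoc)
  then show ?thesis
    using \<open>y > 0\<close> Gamma_real_pos[OF \<open>s > 0\<close>]
    by (simp add: ennreal_mult[symmetric] powr_minus mult.commute)
qed

lemma Gamma_mult_Psi_laplace:
  assumes "p > 0" "g > 0" "z \<ge> 0"
  shows "ennreal (Gamma g) * Psi_laplace p (- g) z = ennreal (Gamma p) * Psi_stieltjes p g z"
proof -
  define h where "h t x = indicator {0<..} t * indicator {0<..} x * t powr (p - 1) * x powr (g - 1)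
    * exp (- (z * t + x + t * x))" for t x :: real
  have [measurable]: "(\<lambda>y. h (fst y) (snd y)) \<in> borel_measurable (borel \<Otimes>\<^sub>M borel)"
    unfolding h_def by measurable
  have integral_x: "(\<integral>\<^sup>+x. ennreal (h t x) \<partial>lborel) = ennreal (Gamma g) * ennreal (Psi_kernel p (- g) z t)"
    for t
  proof (cases "t > 0")
    case True
    have "h t x = exp (- z * t) * t powr (p - 1) * (indicator {0<..} x * x powr (g - 1) * exp (- ((1 + t) * x)))"
      for x
      using True by (simp add: h_def exp_add[symmetric] algebra_simps)
    then have "(\<integral>\<^sup>+x. ennreal (h t x) \<partial>lborel) = ennreal (exp (- z * t) * t powr (p - 1))
        * (\<integral>\<^sup>+x. ennreal (indicator {0<..} x * x powr (g - 1) * exp (- ((1 + t) * x))) \<partial>lborel)"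
      using True by (simp add: ennreal_mult nn_integral_cmult)
    also have "\<dots> = ennreal (exp (- z * t) * t powr (p - 1)) * ennreal (Gamma g * (1 + t) powr (- g))"
      using True nn_integral_Gamma_scaled[OF \<open>g > 0\<close>, of "1 + t"] by simp
    finally show ?thesis
      using True Gamma_real_pos[OF \<open>g > 0\<close>]
      by (simp add: Psi_kernel_def ennreal_mult[symmetric] mult_ac)
  qed (simp add: h_def Psi_kernel_def)
  have integral_t: "(\<integral>\<^sup>+t. ennreal (h t x) \<partial>lborel)
      = ennreal (Gamma p) * ennreal (indicator {0<..} x * x powr (g - 1) * exp (- x) * (x + z) powr (- p))" for x
  proof (cases "x > 0")
    case True
    have "h t x = x powr (g - 1) * exp (- x) * (indicator {0<..} t * t powr (p - 1) * exp (- ((z + x) * t)))"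
      for t
      using True by (simp add: h_def exp_add[symmetric] algebra_simps)
    then have "(\<integral>\<^sup>+t. ennreal (h t x) \<partial>lborel) = ennreal (x powr (g - 1) * exp (- x))
        * (\<integral>\<^sup>+t. ennreal (indicator {0<..} t * t powr (p - 1) * exp (- ((z + x) * t))) \<partial>lborel)"
      using True by (simp add: ennreal_mult nn_integral_cmult)
    also have "\<dots> = ennreal (x powr (g - 1) * exp (- x)) * ennreal (Gamma p * (x + z) powr (- p))"
      using True \<open>z \<ge> 0\<close> nn_integral_Gamma_scaled[OF \<open>p > 0\<close>, of "z + x"] by (simp add: add.commute)
    finally show ?thesis
      using True Gamma_real_pos[OF \<open>p > 0\<close>] \<open>z \<ge> 0\<close>
      by (simp add: ennreal_mult[symmetric] mult_ac)
  qed (simp add: h_def)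
  have "ennreal (Gamma g) * Psi_laplace p (- g) z = (\<integral>\<^sup>+t. \<integral>\<^sup>+x. ennreal (h t x) \<partial>lborel \<partial>lborel)"
    unfolding Psi_laplace_def integral_x by (rule nn_integral_cmult[symmetric]) measurable
  also have "\<dots> = (\<integral>\<^sup>+x. \<integral>\<^sup>+t. ennreal (h t x) \<partial>lborel \<partial>lborel)"
    by (rule nn_integral_lborel_swap) measurable
  also have "\<dots> = ennreal (Gamma p) * Psi_stieltjes p g z"
    unfolding Psi_stieltjes_def integral_t by (rule nn_integral_cmult) measurable
  finally show ?thesis .
qed

lemma Psi_stieltjes_zero:
  assumes "p < g"
  shows "Psi_stieltjes p g 0 = ennreal (Gamma (g - p))"
proof -
  have "Psi_stieltjes p g 0
      = (\<integral>\<^sup>+x. ennreal (indicator {0<..} x * x powr ((g - p) - 1) * exp (- (1 * x))) \<partial>lborel)"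
    unfolding Psi_stieltjes_def
    by (intro nn_integral_cong arg_cong[where f = ennreal])
       (auto simp: indicator_def powr_add[symmetric] algebra_simps)
  also have "\<dots> = ennreal (Gamma (g - p))"
    using nn_integral_Gamma_scaled[of "g - p" 1] assms by simp
  finally show ?thesis .
qed

lemma Psi_stieltjes_antimono:
  assumes "p > 0" "z \<ge> 0"
  shows "Psi_stieltjes p g z \<le> Psi_stieltjes p g 0"
  unfolding Psi_stieltjes_def
proof (intro nn_integral_mono ennreal_leI)
  fix x :: real
  show "indicator {0<..} x * x powr (g - 1) * exp (- x) * (x + z) powr (- p)
      \<le> indicator {0<..} x * x powr (g - 1) * exp (- x) * (x + 0) powr (- p)"
  proof (cases "x > 0")
    case True
    then have "(x + z) powr (- p) \<le> x powr (- p)"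
      using assms by (intro powr_mono2') auto
    then show ?thesis
      using True by (auto intro!: mult_left_mono)
  qed simp
qed

lemma Psi_stieltjes_pos:
  assumes "z \<ge> 0"
  shows "0 < Psi_stieltjes p g z"
  unfolding Psi_stieltjes_def
  by (rule nn_integral_pos_of_interval[where a = 1 and b = 2]) (use assms in auto)

lemma Psi_stieltjes_finite:
  assumes "0 < p" "p < g" "z \<ge> 0"
  shows "Psi_stieltjes p g z < \<infinity>"
  using Psi_stieltjes_antimono[of p z g] Psi_stieltjes_zero[of p g] assms
  by (simp add: order_le_less_trans)

lemma Psi_laplace_pos: "0 < Psi_laplace p b z"
  unfolding Psi_laplace_def Psi_kernel_def
  by (rule nn_integral_pos_of_interval[where a = 1 and b = 2]) auto

lemma Psi_laplace_finite:
  assumes "0 < p" "p < g" "z \<ge> 0"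
  shows "Psi_laplace p (- g) z < \<infinity>"
proof -
  have "g > 0"
    using assms by simp
  have "ennreal (Gamma g) * Psi_laplace p (- g) z < \<infinity>"
    unfolding Gamma_mult_Psi_laplace[OF \<open>p > 0\<close> \<open>g > 0\<close> \<open>z \<ge> 0\<close>]
    using Psi_stieltjes_finite[OF assms] by (simp add: ennreal_mult_less_top)
  then show ?thesis
    using Gamma_real_pos[OF \<open>g > 0\<close>] by (auto simp: ennreal_mult_less_top)
qed

lemma Psi_eq_Psi_stieltjes:
  assumes "p > 0" "c < 1" "z \<ge> 0"
  shows "Psi p c z = enn2real (Psi_stieltjes p (p + 1 - c) z) / Gamma (p + 1 - c)"
proof -
  define g where "g = p + 1 - c"
  have "g > 0" "Gamma p > 0" "Gamma g > 0"
    using assms by (simp_all add: g_def Gamma_real_pos)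
  have "Gamma g * enn2real (Psi_laplace p (- g) z) = Gamma p * enn2real (Psi_stieltjes p g z)"
    using arg_cong[OF Gamma_mult_Psi_laplace[OF \<open>p > 0\<close> \<open>g > 0\<close> \<open>z \<ge> 0\<close>], of enn2real]
      \<open>Gamma p > 0\<close> \<open>Gamma g > 0\<close> by (simp add: enn2real_mult)
  moreover have "c - p - 1 = - g"
    by (simp add: g_def)
  ultimately show ?thesis
    using \<open>Gamma p > 0\<close> \<open>Gamma g > 0\<close>
    by (simp add: Psi_eq_Psi_laplace g_def field_simps)
qed

lemma Psi_stieltjes_Cauchy_Schwarz:
  "(Psi_stieltjes (a + l) g z)\<^sup>2 \<le> Psi_stieltjes a g z * Psi_stieltjes (a + 2 * l) g z"
proof -
  define w where "w x = indicator {0<..} x * x powr (g - 1) * exp (- x) * (x + z) powr (- a)" for x :: real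
  have w_nonneg: "w x \<ge> 0" for x
    by (simp add: w_def)
  let ?f = "\<lambda>x. ennreal (sqrt (w x))" and ?h = "\<lambda>x. ennreal (sqrt (w x) * (x + z) powr (- l))"
  have "(\<integral>\<^sup>+x. ?f x * ?h x \<partial>lborel)\<^sup>2 \<le> (\<integral>\<^sup>+x. ?f x ^ 2 \<partial>lborel) * (\<integral>\<^sup>+x. ?h x ^ 2 \<partial>lborel)"
    by (rule Cauchy_Schwarz_nn_integral) (simp_all add: w_def)
  moreover have "(x + z) powr (- a) * (x + z) powr (- l) = (x + z) powr (- (a + l))"
    and "(x + z) powr (- a) * ((x + z) powr (- l))\<^sup>2 = (x + z) powr (- (a + 2 * l))" for x
    by (simp_all add: power2_eq_square powr_add[symmetric])
  ultimately show ?thesis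
    unfolding Psi_stieltjes_def
    by (simp add: ennreal_mult'[symmetric] ennreal_power w_nonneg power_mult_distrib
        real_sqrt_pow2 w_def mult_ac)
qed

section \<open>Scale and ratio coordinates on the quadrant\<close>

text \<open>The prefix \<open>polar_\<close> refers to these coordinates: a point \<open>(s, t)\<close> of the open quadrant is written as \<open>s = \<sigma> r / (1 + r)\<close>, \<open>t = \<sigma> / (1 + r)\<close>,
  i.e. \<open>\<sigma> = s + t\<close> and \<open>r = s / t\<close>. Then \<open>s t = \<sigma>\<^sup>2 polar_q r\<close>, \<open>(1 + s) (1 + t) = 1 + \<sigma> + \<sigma>\<^sup>2 polar_q r\<close>,
  \<open>s\<^bsup>2l\<^esup> + t\<^bsup>2l\<^esup> = 2 (s t)\<^bsup>l\<^esup> polar_C l r\<close>, and the Jacobian is \<open>\<sigma> / (1 + r)\<^sup>2\<close>.\<close>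

definition polar_q :: "real \<Rightarrow> real" where
  "polar_q r = r / (1 + r)\<^sup>2"

definition polar_K :: "real \<Rightarrow> real \<Rightarrow> real \<Rightarrow> real" where
  "polar_K b \<sigma> q = (1 + \<sigma> + \<sigma>\<^sup>2 * q) powr b"

definition polar_C :: "real \<Rightarrow> real \<Rightarrow> real" where
  "polar_C l r = (r powr l + r powr (- l)) / 2"

definition polar_radial :: "real \<Rightarrow> real \<Rightarrow> real \<Rightarrow> real" where
  "polar_radial a l \<sigma> = indicator {0<..} \<sigma> * (2 * \<sigma> powr (2 * a - 1 + 2 * l))"

definition polar_angular :: "real \<Rightarrow> real \<Rightarrow> real \<Rightarrow> real" where
  "polar_angular a l r = indicator {0<..} r * (polar_q r powr (a - 1 + l) / (1 + r)\<^sup>2)"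

definition polar_density :: "real \<Rightarrow> real \<Rightarrow> real \<Rightarrow> real \<Rightarrow> real \<Rightarrow> real \<Rightarrow> real" where
  "polar_density a l b z \<sigma> r =
     polar_radial a l \<sigma> * polar_angular a l r * exp (- z * \<sigma>) * polar_K b \<sigma> (polar_q r)"

lemma polar_K_strict_RR2:
  assumes "b < 0" "0 < \<sigma>'" "\<sigma>' < \<sigma>" "0 < q" "q < q'"
  shows "polar_K b \<sigma> q' * polar_K b \<sigma>' q < polar_K b \<sigma> q * polar_K b \<sigma>' q'"
proof -
  let ?k = "\<lambda>\<sigma> q. 1 + \<sigma> + \<sigma>\<^sup>2 * q"
  have pos: "0 < ?k \<sigma> q" "0 < ?k \<sigma>' q'" "0 < ?k \<sigma> q'" "0 < ?k \<sigma>' q"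
    using assms by (auto intro!: add_pos_nonneg)
  have "0 < (\<sigma> - \<sigma>') * (\<sigma> + \<sigma>' + \<sigma> * \<sigma>')"
    using assms by (intro mult_pos_pos) (auto intro!: add_pos_pos)
  also have "(\<sigma> - \<sigma>') * (\<sigma> + \<sigma>' + \<sigma> * \<sigma>') = \<sigma>\<^sup>2 * (1 + \<sigma>') - \<sigma>'\<^sup>2 * (1 + \<sigma>)"
    by (simp add: power2_eq_square algebra_simps)
  finally have "0 < (q' - q) * (\<sigma>\<^sup>2 * (1 + \<sigma>') - \<sigma>'\<^sup>2 * (1 + \<sigma>))"
    using assms by (intro mult_pos_pos) auto
  also have "\<dots> = ?k \<sigma> q' * ?k \<sigma>' q - ?k \<sigma> q * ?k \<sigma>' q'"
    by (simp add: algebra_simps)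
  finally have "(?k \<sigma> q' * ?k \<sigma>' q) powr b < (?k \<sigma> q * ?k \<sigma>' q') powr b"
    using pos \<open>b < 0\<close> by (intro powr_less_mono2_neg) auto
  then show ?thesis
    unfolding polar_K_def using pos by (simp add: powr_mult)
qed

lemma exp_strict_RR2:
  fixes z1 z2 \<sigma> \<sigma>' :: real
  assumes "z1 < z2" "\<sigma>' < \<sigma>"
  shows "exp (- z2 * \<sigma>) * exp (- z1 * \<sigma>') < exp (- z1 * \<sigma>) * exp (- z2 * \<sigma>')"
proof -
  have "0 < (z2 - z1) * (\<sigma> - \<sigma>')"
    using assms by simp
  then show ?thesis
    by (simp add: exp_add[symmetric] algebra_simps)
qed

lemma polar_C_eq_cosh: "r > 0 \<Longrightarrow> polar_C l r = cosh (l * ln r)"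
  by (simp add: polar_C_def cosh_def powr_def)

lemma polar_q_eq_cosh:
  assumes "r > 0"
  shows "polar_q r = 1 / (2 * cosh (ln r) + 2)"
proof -
  have "2 * cosh (ln r) + 2 = (1 + r)\<^sup>2 / r"
    using assms by (simp add: cosh_ln_real field_simps power2_eq_square)
  then show ?thesis
    by (simp add: polar_q_def)
qed

lemma polar_C_strict_antimono:
  assumes "l > 0" "r > 0" "r' > 0" and "polar_q r < polar_q r'"
  shows "polar_C l r' < polar_C l r"
proof -
  have "0 < 2 * cosh (ln r) + 2" "0 < 2 * cosh (ln r') + 2"
    using cosh_real_pos[of "ln r"] cosh_real_pos[of "ln r'"] by linarith+
  then have "cosh (ln r') < cosh (ln r)"
    using \<open>polar_q r < polar_q r'\<close> unfolding polar_q_eq_cosh[OF \<open>r > 0\<close>] polar_q_eq_cosh[OF \<open>r' > 0\<close>]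
    by (simp add: divide_simps)
  then have "\<bar>ln r'\<bar> < \<bar>ln r\<bar>"
    by (metis abs_ge_zero cosh_real_abs cosh_real_nonneg_less_iff)
  then have "\<bar>l * ln r'\<bar> < \<bar>l * ln r\<bar>"
    using \<open>l > 0\<close> by (simp add: abs_mult)
  then have "cosh (l * ln r') < cosh (l * ln r)"
    by (metis abs_ge_zero cosh_real_abs cosh_real_nonneg_less_iff)
  then show ?thesis
    using assms by (simp add: polar_C_eq_cosh)
qed

lemma polar_q_strict_antimono:
  assumes "1 < r" "r < r'"
  shows "polar_q r' < polar_q r"
proof -
  have "r * r' > 1"
    using assms by (smt (verit) mult_less_cancel_left1)
  then have "(r' - r) * (1 - r * r') < 0"
    using assms by (intro mult_pos_neg) auto
  moreover have "r' * (1 + r)\<^sup>2 - r * (1 + r')\<^sup>2 = (r' - r) * (1 - r * r')"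
    by (simp add: power2_eq_square algebra_simps)
  ultimately have "r' * (1 + r)\<^sup>2 < r * (1 + r')\<^sup>2"
    by linarith
  then show ?thesis
    using assms by (simp add: polar_q_def divide_simps)
qed

text \<open>Symmetrising over \<open>\<sigma> \<leftrightarrow> \<sigma>'\<close> and \<open>r \<leftrightarrow> r'\<close> reduces the monotonicity to the sign of
  \<open>polar_defect\<close>, whose three factors have the signs of \<open>\<sigma> - \<sigma>'\<close>, \<open>(\<sigma> - \<sigma>') (q r' - q r)\<close> and
  \<open>q r' - q r\<close>.\<close>

definition polar_defect ::
    "real \<Rightarrow> real \<Rightarrow> real \<Rightarrow> real \<Rightarrow> real \<Rightarrow> real \<Rightarrow> real \<Rightarrow> real \<Rightarrow> real" where
  "polar_defect b l z1 z2 \<sigma> r \<sigma>' r' =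
     (exp (- z1 * \<sigma>) * exp (- z2 * \<sigma>') - exp (- z2 * \<sigma>) * exp (- z1 * \<sigma>'))
     * (polar_K b \<sigma> (polar_q r) * polar_K b \<sigma>' (polar_q r') - polar_K b \<sigma> (polar_q r') * polar_K b \<sigma>' (polar_q r))
     * (polar_C l r - polar_C l r')"

lemma polar_defect_swap:
  "polar_defect b l z1 z2 \<sigma>' r \<sigma> r' = polar_defect b l z1 z2 \<sigma> r \<sigma>' r'"
  "polar_defect b l z1 z2 \<sigma> r' \<sigma>' r = polar_defect b l z1 z2 \<sigma> r \<sigma>' r'"
  by (simp_all add: polar_defect_def algebra_simps)

lemma polar_defect_pos_ordered:
  assumes "z1 < z2" "b < 0" "l > 0" "0 < \<sigma>'" "\<sigma>' < \<sigma>" "0 < r" "0 < r'"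
    and "polar_q r < polar_q r'"
  shows "0 < polar_defect b l z1 z2 \<sigma> r \<sigma>' r'"
proof -
  have "0 < polar_q r"
    using assms by (simp add: polar_q_def)
  have "exp (- z2 * \<sigma>) * exp (- z1 * \<sigma>') < exp (- z1 * \<sigma>) * exp (- z2 * \<sigma>')"
    using exp_strict_RR2 assms by blast
  moreover have "polar_K b \<sigma> (polar_q r') * polar_K b \<sigma>' (polar_q r)
      < polar_K b \<sigma> (polar_q r) * polar_K b \<sigma>' (polar_q r')"
    using polar_K_strict_RR2 \<open>0 < polar_q r\<close> assms by blast
  moreover have "polar_C l r' < polar_C l r"
    using polar_C_strict_antimono assms by blast
  ultimately show ?thesis
    unfolding polar_defect_def by (intro mult_pos_pos) simp_all
qed

lemma polar_defect_pos:
  assumes "z1 < z2" "b < 0" "l > 0" "\<sigma> > 0" "\<sigma>' > 0" "r > 0" "r' > 0"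
    and "\<sigma> \<noteq> \<sigma>'" "polar_q r \<noteq> polar_q r'"
  shows "0 < polar_defect b l z1 z2 \<sigma> r \<sigma>' r'"
proof -
  have sigma_ordered: "0 < polar_defect b l z1 z2 \<sigma> r \<sigma>' r'"
    if "0 < \<sigma>'" "\<sigma>' < \<sigma>" for \<sigma> \<sigma>'
  proof (cases "polar_q r < polar_q r'")
    case True
    then show ?thesis
      using polar_defect_pos_ordered assms(1-3,6,7) that by blast
  next
    case False
    then have "polar_q r' < polar_q r"
      using assms(9) by simp
    then show ?thesis
      using polar_defect_pos_ordered[of z1 z2 b l \<sigma>' \<sigma> r' r] assms(1-3,6,7) that
      by (simp add: polar_defect_swap)
  qed
  show ?thesis
  proof (cases "\<sigma>' < \<sigma>")
    case True
    then show ?thesis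
      using sigma_ordered \<open>\<sigma>' > 0\<close> by blast
  next
    case False
    then have "0 < polar_defect b l z1 z2 \<sigma>' r \<sigma> r'"
      using sigma_ordered[of \<sigma> \<sigma>'] assms(4,8) by simp
    then show ?thesis
      by (simp only: polar_defect_swap)
  qed
qed

lemma polar_defect_nonneg:
  assumes "z1 < z2" "b < 0" "l > 0" "\<sigma> > 0" "\<sigma>' > 0" "r > 0" "r' > 0"
  shows "0 \<le> polar_defect b l z1 z2 \<sigma> r \<sigma>' r'"
  using polar_defect_pos[OF assms] by (cases "\<sigma> = \<sigma>' \<or> polar_q r = polar_q r'") (auto simp: polar_defect_def)

lemma polar_density_symmetrize4:
  "symmetrize4 (\<lambda>\<sigma> r. polar_density a l b z1 \<sigma> r * polar_C l r) (polar_density a l b z2) \<sigma> r \<sigma>' r'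
   = symmetrize4 (\<lambda>\<sigma> r. polar_density a l b z2 \<sigma> r * polar_C l r) (polar_density a l b z1) \<sigma> r \<sigma>' r'
     + polar_radial a l \<sigma> * polar_radial a l \<sigma>' * polar_angular a l r * polar_angular a l r'
       * polar_defect b l z1 z2 \<sigma> r \<sigma>' r'"
  by (simp add: symmetrize4_def polar_density_def polar_defect_def algebra_simps)

lemma polar_density_nonneg: "polar_density a l b z \<sigma> r \<ge> 0"
  by (simp add: polar_density_def polar_radial_def polar_angular_def polar_q_def polar_K_def)

lemma polar_C_nonneg: "polar_C l r \<ge> 0"
  by (simp add: polar_C_def)

lemma borel_measurable2_polar_density:
  "borel_measurable2 (polar_density a l b z)"
  "borel_measurable2 (\<lambda>\<sigma> r. polar_density a l b z \<sigma> r * polar_C l r)"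
  unfolding borel_measurable2_def polar_density_def polar_radial_def polar_angular_def polar_q_def
    polar_K_def polar_C_def borel_prod[symmetric]
  by measurable measurable

lemma polar_density_ratio_strict_antimono:
  fixes a l b z1 z2 :: real
  assumes "z1 < z2" "b < 0" "l > 0"
  defines "DC z \<equiv> (\<lambda>\<sigma> r. polar_density a l b z \<sigma> r * polar_C l r)"
  assumes finite: "nn_integral2 (DC z2) * nn_integral2 (polar_density a l b z1) \<noteq> \<infinity>"
  shows "nn_integral2 (DC z2) * nn_integral2 (polar_density a l b z1)
       < nn_integral2 (DC z1) * nn_integral2 (polar_density a l b z2)"
proof (rule nn_integral2_mult_less_by_symmetrization[where sa = 1 and sb = 2 and ra = 1 and rb = 2
      and sa' = 3 and sb' = 4 and ra' = 3 and rb' = 4])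
  let ?W = "\<lambda>\<sigma> r \<sigma>' r'. polar_radial a l \<sigma> * polar_radial a l \<sigma>' * polar_angular a l r * polar_angular a l r'"
  have W_pos: "?W \<sigma> r \<sigma>' r' > 0" if "\<sigma> > 0" "r > 0" "\<sigma>' > 0" "r' > 0" for \<sigma> r \<sigma>' r'
    using that by (simp add: polar_radial_def polar_angular_def polar_q_def)
  have W_zero: "?W \<sigma> r \<sigma>' r' = 0" if "\<not> (\<sigma> > 0 \<and> r > 0 \<and> \<sigma>' > 0 \<and> r' > 0)" for \<sigma> r \<sigma>' r'
    using that by (auto simp: polar_radial_def polar_angular_def)
  show "symmetrize4 (DC z2) (polar_density a l b z1) \<sigma> r \<sigma>' r'
      \<le> symmetrize4 (DC z1) (polar_density a l b z2) \<sigma> r \<sigma>' r'" for \<sigma> r \<sigma>' r'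
  proof (cases "\<sigma> > 0 \<and> r > 0 \<and> \<sigma>' > 0 \<and> r' > 0")
    case True
    then have "0 \<le> ?W \<sigma> r \<sigma>' r' * polar_defect b l z1 z2 \<sigma> r \<sigma>' r'"
      using W_pos polar_defect_nonneg assms(1-3) by (simp add: less_imp_le)
    then show ?thesis
      unfolding DC_def polar_density_symmetrize4[of a l b z1 z2] by simp
  qed (simp add: DC_def polar_density_symmetrize4[of a l b z1 z2] W_zero)
  show "symmetrize4 (DC z2) (polar_density a l b z1) \<sigma> r \<sigma>' r'
      < symmetrize4 (DC z1) (polar_density a l b z2) \<sigma> r \<sigma>' r'"
    if "\<sigma> \<in> {1<..<2}" "r \<in> {1<..<2}" "\<sigma>' \<in> {3<..<4}" "r' \<in> {3<..<4}" for \<sigma> r \<sigma>' r'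
  proof -
    have "polar_q r' < polar_q r"
      using that by (intro polar_q_strict_antimono) auto
    then have "0 < polar_defect b l z1 z2 \<sigma> r \<sigma>' r'"
      using that by (intro polar_defect_pos assms(1-3)) auto
    moreover have "?W \<sigma> r \<sigma>' r' > 0"
      using that by (intro W_pos) auto
    ultimately show ?thesis
      unfolding DC_def polar_density_symmetrize4[of a l b z1 z2] by simp
  qed
qed (use finite in \<open>simp_all add: DC_def borel_measurable2_polar_density polar_density_nonneg polar_C_nonneg\<close>)

lemma polar_coordinates:
  fixes \<sigma> r :: real
  assumes "\<sigma> > 0" "r > 0"
  defines "s \<equiv> \<sigma> * r / (1 + r)" and "t \<equiv> \<sigma> / (1 + r)"
  shows "s > 0" "t > 0" "s = r * t" "s + t = \<sigma>" "s * t = \<sigma>\<^sup>2 * polar_q r"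
    "(1 + s) * (1 + t) = 1 + \<sigma> + \<sigma>\<^sup>2 * polar_q r"
proof -
  show "s > 0" "t > 0" "s = r * t"
    using assms by (simp_all add: s_def t_def)
  have "s + t = \<sigma> * (1 + r) / (1 + r)"
    by (simp add: s_def t_def add_divide_distrib[symmetric] algebra_simps)
  then show sum: "s + t = \<sigma>"
    using assms by simp
  show prod: "s * t = \<sigma>\<^sup>2 * polar_q r"
    by (simp add: s_def t_def polar_q_def power2_eq_square)
  show "(1 + s) * (1 + t) = 1 + \<sigma> + \<sigma>\<^sup>2 * polar_q r"
    using sum prod by (simp add: algebra_simps)
qed

lemma Psi_kernel_polar:
  fixes \<sigma> r :: real
  assumes "\<sigma> > 0" "r > 0"
  defines "s \<equiv> \<sigma> * r / (1 + r)" and "t \<equiv> \<sigma> / (1 + r)"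
  shows "Psi_kernel (a + x) b z s * Psi_kernel (a + y) b z t
    = exp (- z * \<sigma>) * (\<sigma>\<^sup>2 * polar_q r) powr (a - 1) * polar_K b \<sigma> (polar_q r) * (s powr x * t powr y)"
proof -
  note st = polar_coordinates[OF assms(1,2), folded s_def t_def]
  have "Psi_kernel (a + x) b z s * Psi_kernel (a + y) b z t
      = (exp (- z * s) * exp (- z * t)) * (s powr (a + x - 1) * t powr (a + y - 1))
        * ((1 + s) powr b * (1 + t) powr b)"
    using st(1,2) by (simp add: Psi_kernel_def mult_ac)
  also have "exp (- z * s) * exp (- z * t) = exp (- z * \<sigma>)"
    unfolding st(4)[symmetric] by (simp add: exp_add[symmetric] algebra_simps)
  also have "s powr (a + x - 1) * t powr (a + y - 1) = (s * t) powr (a - 1) * (s powr x * t powr y)"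
    using st(1,2) by (simp add: powr_mult powr_add[symmetric] algebra_simps)
  also have "(1 + s) powr b * (1 + t) powr b = polar_K b \<sigma> (polar_q r)"
    using st(1,2) unfolding polar_K_def st(6)[symmetric] by (simp add: powr_mult)
  finally show ?thesis
    unfolding st(5) by (simp add: mult_ac)
qed

lemma polar_coordinates_outside:
  fixes \<sigma> r :: real
  assumes "\<not> (\<sigma> > 0 \<and> r > 0)"
  shows "\<not> (\<sigma> * r / (1 + r) > 0 \<and> \<sigma> / (1 + r) > 0)"
proof
  assume pos: "\<sigma> * r / (1 + r) > 0 \<and> \<sigma> / (1 + r) > 0"
  then have "\<sigma> \<noteq> 0" "1 + r \<noteq> 0"
    by auto
  then have "r = (\<sigma> * r / (1 + r)) / (\<sigma> / (1 + r))"
    by simp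
  also have "\<dots> > 0"
    using pos by (blast intro: divide_pos_pos)
  finally have "r > 0" .
  then show False
    using pos assms by (simp add: zero_less_divide_iff)
qed

lemma polar_power_sum:
  fixes \<sigma> r :: real
  assumes "\<sigma> > 0" "r > 0"
  defines "s \<equiv> \<sigma> * r / (1 + r)" and "t \<equiv> \<sigma> / (1 + r)"
  shows "s powr (2 * l) + t powr (2 * l) = 2 * (\<sigma>\<^sup>2 * polar_q r) powr l * polar_C l r"
proof -
  note st = polar_coordinates[OF assms(1,2), folded s_def t_def]
  have "(\<sigma>\<^sup>2 * polar_q r) powr l = r powr l * t powr (2 * l)"
    using st(2) \<open>r > 0\<close> unfolding st(5)[symmetric] st(3)
    by (simp add: powr_mult powr_add[symmetric] mult.assoc)
  moreover have "s powr (2 * l) = r powr l * r powr l * t powr (2 * l)"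
    using st(2) \<open>r > 0\<close> unfolding st(3) by (simp add: powr_mult powr_add[symmetric])
  moreover have "r powr l * r powr (- l) = 1"
    using \<open>r > 0\<close> by (simp add: powr_add[symmetric])
  ultimately show ?thesis
    unfolding polar_C_def by (simp add: algebra_simps)
qed

lemma polar_density_eq_Jacobian:
  fixes \<sigma> r :: real
  assumes "\<sigma> > 0" "r > 0"
  shows "polar_density a l b z \<sigma> r = \<sigma> / (1 + r)\<^sup>2
    * (exp (- z * \<sigma>) * (\<sigma>\<^sup>2 * polar_q r) powr (a - 1) * polar_K b \<sigma> (polar_q r) * (2 * (\<sigma>\<^sup>2 * polar_q r) powr l))"
proof -
  have "polar_q r > 0"
    using assms by (simp add: polar_q_def)
  have "(\<sigma>\<^sup>2) powr (a - 1 + l) = \<sigma> powr (2 * a - 2 + 2 * l)"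
    using assms by (simp add: power2_eq_square powr_mult powr_add[symmetric] algebra_simps)
  moreover have "(\<sigma>\<^sup>2 * polar_q r) powr (a - 1) * (\<sigma>\<^sup>2 * polar_q r) powr l
      = (\<sigma>\<^sup>2) powr (a - 1 + l) * polar_q r powr (a - 1 + l)"
    using \<open>polar_q r > 0\<close> by (simp add: powr_add powr_mult)
  ultimately have "(\<sigma>\<^sup>2 * polar_q r) powr (a - 1) * (\<sigma>\<^sup>2 * polar_q r) powr l
      = \<sigma> powr (2 * a - 2 + 2 * l) * polar_q r powr (a - 1 + l)"
    by simp
  moreover have "\<sigma> powr 1 * \<sigma> powr (2 * a - 2 + 2 * l) = \<sigma> powr (2 * a - 1 + 2 * l)"
    by (subst powr_add[symmetric]) (simp add: algebra_simps)
  ultimately have "polar_radial a l \<sigma> * polar_angular a l r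
      = \<sigma> / (1 + r)\<^sup>2 * ((\<sigma>\<^sup>2 * polar_q r) powr (a - 1) * (2 * (\<sigma>\<^sup>2 * polar_q r) powr l))"
    using assms by (simp add: polar_radial_def polar_angular_def algebra_simps)
  then show ?thesis
    unfolding polar_density_def by (simp add: mult_ac)
qed

lemma Psi_kernel_products_polar:
  fixes \<sigma> r :: real
  defines "s \<equiv> \<sigma> * r / (1 + r)" and "t \<equiv> \<sigma> / (1 + r)"
  shows "\<sigma> / (1 + r)\<^sup>2 * (Psi_kernel a b z s * Psi_kernel (a + 2 * l) b z t
      + Psi_kernel (a + 2 * l) b z s * Psi_kernel a b z t) = polar_density a l b z \<sigma> r * polar_C l r"
      (is ?P)
    and "\<sigma> / (1 + r)\<^sup>2 * (Psi_kernel (a + l) b z s * Psi_kernel (a + l) b z t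
      + Psi_kernel (a + l) b z s * Psi_kernel (a + l) b z t) = polar_density a l b z \<sigma> r"
      (is ?Q)
proof -
  have "?P \<and> ?Q"
  proof (cases "\<sigma> > 0 \<and> r > 0")
    case True
    then have "\<sigma> > 0" "r > 0"
      by auto
    note st = polar_coordinates[OF this, folded s_def t_def]
    define E where "E = exp (- z * \<sigma>) * (\<sigma>\<^sup>2 * polar_q r) powr (a - 1) * polar_K b \<sigma> (polar_q r)"
    have kernels: "Psi_kernel a b z s * Psi_kernel (a + 2 * l) b z t = E * t powr (2 * l)"
      "Psi_kernel (a + 2 * l) b z s * Psi_kernel a b z t = E * s powr (2 * l)"
      "Psi_kernel (a + l) b z s * Psi_kernel (a + l) b z t = E * (\<sigma>\<^sup>2 * polar_q r) powr l"
      using Psi_kernel_polar[OF \<open>\<sigma> > 0\<close> \<open>r > 0\<close>, folded s_def t_def, of a 0 b z "2 * l"]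
        Psi_kernel_polar[OF \<open>\<sigma> > 0\<close> \<open>r > 0\<close>, folded s_def t_def, of a "2 * l" b z 0]
        Psi_kernel_polar[OF \<open>\<sigma> > 0\<close> \<open>r > 0\<close>, folded s_def t_def, of a l b z l]
        st(1,2)
      by (simp_all add: E_def powr_mult[symmetric] st(5))
    have Jacobian: "\<sigma> / (1 + r)\<^sup>2 * (E * (2 * (\<sigma>\<^sup>2 * polar_q r) powr l)) = polar_density a l b z \<sigma> r"
      unfolding polar_density_eq_Jacobian[OF \<open>\<sigma> > 0\<close> \<open>r > 0\<close>] E_def ..
    have "\<sigma> / (1 + r)\<^sup>2 * (Psi_kernel a b z s * Psi_kernel (a + 2 * l) b z t
        + Psi_kernel (a + 2 * l) b z s * Psi_kernel a b z t)
        = \<sigma> / (1 + r)\<^sup>2 * (E * (s powr (2 * l) + t powr (2 * l)))"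
      unfolding kernels by (simp add: algebra_simps)
    also have "\<dots> = \<sigma> / (1 + r)\<^sup>2 * (E * (2 * (\<sigma>\<^sup>2 * polar_q r) powr l)) * polar_C l r"
      unfolding polar_power_sum[OF \<open>\<sigma> > 0\<close> \<open>r > 0\<close>, folded s_def t_def] by (simp add: mult_ac)
    finally have ?P
      unfolding Jacobian .
    moreover have ?Q
      using Jacobian unfolding kernels by (simp add: algebra_simps)
    ultimately show ?thesis ..
  next
    case False
    then show ?thesis
      using polar_coordinates_outside[OF False]
      by (auto simp: s_def t_def Psi_kernel_def polar_density_def polar_radial_def polar_angular_def)
  qed
  then show ?P ?Q
    by blast+
qed

lemma nn_integral2_polar_substitution:
  assumes meas: "borel_measurable2 F" and nonneg: "\<And>s t. F s t \<ge> 0"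
    and outside: "\<And>s t. \<not> (s > 0 \<and> t > 0) \<Longrightarrow> F s t = 0"
  shows "nn_integral2 F = nn_integral2 (\<lambda>\<sigma> r. \<sigma> / (1 + r)\<^sup>2 * F (\<sigma> * r / (1 + r)) (\<sigma> / (1 + r)))"
proof -
  note [measurable (raw)] = meas[THEN borel_measurable2_compose]
  have "nn_integral2 F = (\<integral>\<^sup>+t. \<integral>\<^sup>+r. ennreal (t * F (t * r) t) \<partial>lborel \<partial>lborel)"
    unfolding nn_integral2_def
  proof (rule nn_integral_cong)
    fix t :: real
    show "(\<integral>\<^sup>+s. ennreal (F s t) \<partial>lborel) = (\<integral>\<^sup>+r. ennreal (t * F (t * r) t) \<partial>lborel)"
      by (cases "t > 0") (simp_all add: nn_integral_lborel_scale nonneg outside)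
  qed
  also have "\<dots> = (\<integral>\<^sup>+r. \<integral>\<^sup>+t. ennreal (t * F (t * r) t) \<partial>lborel \<partial>lborel)"
    by (rule nn_integral_lborel_swap) measurable
  also have "\<dots> = nn_integral2 (\<lambda>\<sigma> r. \<sigma> / (1 + r)\<^sup>2 * F (\<sigma> * r / (1 + r)) (\<sigma> / (1 + r)))"
    unfolding nn_integral2_def
  proof (rule nn_integral_cong)
    fix r :: real
    show "(\<integral>\<^sup>+t. ennreal (t * F (t * r) t) \<partial>lborel) =
      (\<integral>\<^sup>+\<sigma>. ennreal (\<sigma> / (1 + r)\<^sup>2 * F (\<sigma> * r / (1 + r)) (\<sigma> / (1 + r))) \<partial>lborel)"
    proof (cases "r > 0")
      case True
      have "t * F (t * r) t \<ge> 0" for t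
        using nonneg[of "t * r" t] outside[of "t * r" t] by (cases "t > 0") auto
      then have "(\<integral>\<^sup>+t. ennreal (t * F (t * r) t) \<partial>lborel)
          = (\<integral>\<^sup>+\<sigma>. ennreal (1 / (1 + r) * (1 / (1 + r) * \<sigma> * F (1 / (1 + r) * \<sigma> * r) (1 / (1 + r) * \<sigma>))) \<partial>lborel)"
        using True by (intro nn_integral_lborel_scale) auto
      then show ?thesis
        by (simp add: power2_eq_square mult_ac)
    next
      case False
      then have "F (t * r) t = 0" "F (t * r / (1 + r)) (t / (1 + r)) = 0" for t
        using outside[of "t * r" t] outside polar_coordinates_outside[of t r]
        by (auto simp: zero_less_mult_iff)
      then show ?thesis
        by simp
    qed
  qed
  finally show ?thesis .
qed

lemma nn_integral2_symmetric_product: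
  fixes f g :: "real \<Rightarrow> real"
  assumes [measurable]: "f \<in> borel_measurable borel" "g \<in> borel_measurable borel"
    and nonneg: "\<And>x. f x \<ge> 0" "\<And>x. g x \<ge> 0"
  shows "nn_integral2 (\<lambda>s t. f s * g t + g s * f t)
    = 2 * ((\<integral>\<^sup>+s. ennreal (f s) \<partial>lborel) * (\<integral>\<^sup>+t. ennreal (g t) \<partial>lborel))"
proof -
  have product: "(\<integral>\<^sup>+t. \<integral>\<^sup>+s. ennreal (u s * v t) \<partial>lborel \<partial>lborel)
      = (\<integral>\<^sup>+s. ennreal (u s) \<partial>lborel) * (\<integral>\<^sup>+t. ennreal (v t) \<partial>lborel)"
    if [measurable]: "u \<in> borel_measurable borel" "v \<in> borel_measurable borel"
      and "\<And>x. u x \<ge> 0" "\<And>x. v x \<ge> 0" for u v :: "real \<Rightarrow> real"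
    using that(3,4) by (simp add: ennreal_mult nn_integral_cmult nn_integral_multc mult.commute)
  have "nn_integral2 (\<lambda>s t. f s * g t + g s * f t)
      = (\<integral>\<^sup>+t. (\<integral>\<^sup>+s. ennreal (f s * g t) \<partial>lborel) + (\<integral>\<^sup>+s. ennreal (g s * f t) \<partial>lborel) \<partial>lborel)"
    unfolding nn_integral2_def
    by (intro nn_integral_cong, subst ennreal_plus, simp_all add: nonneg, rule nn_integral_add) auto
  also have "\<dots> = (\<integral>\<^sup>+t. \<integral>\<^sup>+s. ennreal (f s * g t) \<partial>lborel \<partial>lborel)
      + (\<integral>\<^sup>+t. \<integral>\<^sup>+s. ennreal (g s * f t) \<partial>lborel \<partial>lborel)"
    by (rule nn_integral_add) auto
  also have "\<dots> = 2 * ((\<integral>\<^sup>+s. ennreal (f s) \<partial>lborel) * (\<integral>\<^sup>+t. ennreal (g t) \<partial>lborel))"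
    unfolding product[OF assms(1,2) nonneg] product[OF assms(2,1) nonneg(2,1)]
    by (simp add: mult_2 mult.commute)
  finally show ?thesis .
qed

lemma Psi_laplace_products_polar:
  "2 * (Psi_laplace a b z * Psi_laplace (a + 2 * l) b z)
    = nn_integral2 (\<lambda>\<sigma> r. polar_density a l b z \<sigma> r * polar_C l r)"
  "2 * (Psi_laplace (a + l) b z)\<^sup>2 = nn_integral2 (polar_density a l b z)"
proof -
  have polar: "nn_integral2 (\<lambda>s t. Psi_kernel p b z s * Psi_kernel p' b z t + Psi_kernel p' b z s * Psi_kernel p b z t)
      = nn_integral2 (\<lambda>\<sigma> r. \<sigma> / (1 + r)\<^sup>2 * (Psi_kernel p b z (\<sigma> * r / (1 + r)) * Psi_kernel p' b z (\<sigma> / (1 + r))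
          + Psi_kernel p' b z (\<sigma> * r / (1 + r)) * Psi_kernel p b z (\<sigma> / (1 + r))))" for p p'
    by (rule nn_integral2_polar_substitution)
       (auto simp: borel_measurable2_def borel_prod[symmetric] Psi_kernel_nonneg Psi_kernel_def)
  show "2 * (Psi_laplace a b z * Psi_laplace (a + 2 * l) b z)
      = nn_integral2 (\<lambda>\<sigma> r. polar_density a l b z \<sigma> r * polar_C l r)"
    using polar[of a "a + 2 * l"]
    unfolding Psi_kernel_products_polar Psi_laplace_def
      nn_integral2_symmetric_product[OF Psi_kernel_measurable Psi_kernel_measurable Psi_kernel_nonneg Psi_kernel_nonneg]
    by simp
  show "2 * (Psi_laplace (a + l) b z)\<^sup>2 = nn_integral2 (polar_density a l b z)"
    using polar[of "a + l" "a + l"]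
    unfolding Psi_kernel_products_polar Psi_laplace_def
      nn_integral2_symmetric_product[OF Psi_kernel_measurable Psi_kernel_measurable Psi_kernel_nonneg Psi_kernel_nonneg]
    by (simp add: power2_eq_square)
qed

lemma Psi_laplace_ratio_strict_antimono:
  assumes "b < 0" "l > 0" "z1 < z2"
    and finite: "Psi_laplace a b z2 * Psi_laplace (a + 2 * l) b z2 * (Psi_laplace (a + l) b z1)\<^sup>2 \<noteq> \<infinity>"
  shows "Psi_laplace a b z2 * Psi_laplace (a + 2 * l) b z2 * (Psi_laplace (a + l) b z1)\<^sup>2
       < Psi_laplace a b z1 * Psi_laplace (a + 2 * l) b z1 * (Psi_laplace (a + l) b z2)\<^sup>2"
proof -
  let ?P = "\<lambda>z. Psi_laplace a b z * Psi_laplace (a + 2 * l) b z"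
  let ?Q = "\<lambda>z. (Psi_laplace (a + l) b z)\<^sup>2"
  have "(2 * ?P z2) * (2 * ?Q z1) < (2 * ?P z1) * (2 * ?Q z2)"
    unfolding Psi_laplace_products_polar
    by (rule polar_density_ratio_strict_antimono[OF assms(3,1,2)])
       (use finite in \<open>simp flip: Psi_laplace_products_polar add: ennreal_mult_eq_top_iff\<close>)
  then have "4 * (?P z2 * ?Q z1) < 4 * (?P z1 * ?Q z2)"
    by (simp add: mult_ac)
  then show ?thesis
    by (meson linorder_not_le mult_left_mono zero_le leD)
qed

section \<open>The ratio of Tricomi functions\<close>

definition Psi_ratio :: "real \<Rightarrow> real \<Rightarrow> real \<Rightarrow> real \<Rightarrow> real" where
  "Psi_ratio a l c z = Psi a (c - 2 * l) z * Psi (a + 2 * l) c z / (Psi (a + l) (c - l) z)\<^sup>2"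

lemma Psi_ratio_eq_Psi_stieltjes:
  assumes "a > 0" "l > 0" "c < 1" "z \<ge> 0"
  defines "S p \<equiv> enn2real (Psi_stieltjes p (a + 2 * l + 1 - c) z)"
  shows "Psi_ratio a l c z = S a * S (a + 2 * l) / (S (a + l))\<^sup>2"
proof -
  define g where "g = a + 2 * l + 1 - c"
  have "Gamma g > 0"
    using assms by (intro Gamma_real_pos) (simp add: g_def)
  have "Psi a (c - 2 * l) z = S a / Gamma g" "Psi (a + 2 * l) c z = S (a + 2 * l) / Gamma g"
    "Psi (a + l) (c - l) z = S (a + l) / Gamma g"
    using assms Psi_eq_Psi_stieltjes[of a "c - 2 * l" z] Psi_eq_Psi_stieltjes[of "a + 2 * l" c z]
      Psi_eq_Psi_stieltjes[of "a + l" "c - l" z]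
    by (simp_all add: S_def g_def algebra_simps)
  then show ?thesis
    using \<open>Gamma g > 0\<close> by (simp add: Psi_ratio_def power2_eq_square)
qed

lemma Psi_ratio_zero:
  assumes "a > 0" "l > 0" "c < 1"
  shows "Psi_ratio a l c 0 = Gamma (1 - c) * Gamma (1 - c + 2 * l) / (Gamma (1 - c + l))\<^sup>2"
proof -
  define g where "g = a + 2 * l + 1 - c"
  have at_zero: "enn2real (Psi_stieltjes p g 0) = Gamma (g - p)" if "p < g" for p
    using that Gamma_real_pos[of "g - p"] by (simp add: Psi_stieltjes_zero)
  have "a < g" "a + 2 * l < g" "a + l < g"
    using assms by (simp_all add: g_def)
  moreover have "g - a = 1 - c + 2 * l" "g - (a + 2 * l) = 1 - c" "g - (a + l) = 1 - c + l"
    by (simp_all add: g_def)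
  ultimately have "enn2real (Psi_stieltjes a g 0) = Gamma (1 - c + 2 * l)"
    "enn2real (Psi_stieltjes (a + 2 * l) g 0) = Gamma (1 - c)"
    "enn2real (Psi_stieltjes (a + l) g 0) = Gamma (1 - c + l)"
    using at_zero by metis+
  then show ?thesis
    unfolding Psi_ratio_eq_Psi_stieltjes[OF assms order_refl, folded g_def]
    by (simp add: mult.commute)
qed

lemma Psi_ratio_ge_one:
  assumes "a > 0" "l > 0" "c < 1" "z \<ge> 0"
  shows "1 \<le> Psi_ratio a l c z"
proof -
  define g where "g = a + 2 * l + 1 - c"
  define S where "S p = enn2real (Psi_stieltjes p g z)" for p
  have S_nonneg: "S p \<ge> 0" for p
    by (simp add: S_def)
  have "a < g" "a + l < g" "a + 2 * l < g"
    using assms by (simp_all add: g_def)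
  then have S_finite: "Psi_stieltjes a g z = ennreal (S a)" "Psi_stieltjes (a + l) g z = ennreal (S (a + l))"
    "Psi_stieltjes (a + 2 * l) g z = ennreal (S (a + 2 * l))"
    using Psi_stieltjes_finite[of a g z] Psi_stieltjes_finite[of "a + l" g z]
      Psi_stieltjes_finite[of "a + 2 * l" g z] assms
    by (simp_all add: S_def ennreal_enn2real)
  have "S (a + l) > 0"
    using Psi_stieltjes_pos[OF \<open>z \<ge> 0\<close>, of "a + l" g] unfolding S_finite by simp
  have "ennreal ((S (a + l))\<^sup>2) \<le> ennreal (S a * S (a + 2 * l))"
    using Psi_stieltjes_Cauchy_Schwarz[of a l g z] unfolding S_finite
    by (simp add: S_nonneg ennreal_power ennreal_mult[symmetric])
  then have "(S (a + l))\<^sup>2 \<le> S a * S (a + 2 * l)"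
    by (simp add: S_nonneg ennreal_le_iff)
  then have "1 \<le> S a * S (a + 2 * l) / (S (a + l))\<^sup>2"
    using \<open>S (a + l) > 0\<close> by (simp add: le_divide_eq_1_pos)
  then show ?thesis
    unfolding Psi_ratio_eq_Psi_stieltjes[OF assms] S_def g_def .
qed

lemma Psi_ratio_strict_antimono:
  assumes "a > 0" "l > 0" "c < 1" "0 \<le> z1" "z1 < z2"
  shows "Psi_ratio a l c z2 < Psi_ratio a l c z1"
proof -
  define b where "b = c - a - 2 * l - 1"
  define L where "L p z = enn2real (Psi_laplace p b z)" for p z
  have "b < 0"
    using assms by (simp add: b_def)
  have finite: "Psi_laplace p b z = ennreal (L p z)" if "0 < p" "p \<le> a + 2 * l" "z \<ge> 0" for p z
    using Psi_laplace_finite[of p "- b" z] that assms by (simp add: L_def b_def ennreal_enn2real)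
  have L_pos: "L (a + l) z > 0" if "z \<ge> 0" for z
    using Psi_laplace_pos[of "a + l" b z] finite[of "a + l" z] that assms by simp
  have exponents: "c - 2 * l - a - 1 = b" "c - (a + 2 * l) - 1 = b" "c - l - (a + l) - 1 = b"
    by (simp_all add: b_def)
  have ratio: "Psi_ratio a l c z
      = (Gamma (a + l))\<^sup>2 / (Gamma a * Gamma (a + 2 * l)) * (L a z * L (a + 2 * l) z / (L (a + l) z)\<^sup>2)" for z
    unfolding Psi_ratio_def Psi_eq_Psi_laplace exponents L_def
    by (simp add: power2_eq_square)
  have L_finite: "Psi_laplace a b z = ennreal (L a z)" "Psi_laplace (a + l) b z = ennreal (L (a + l) z)"
    "Psi_laplace (a + 2 * l) b z = ennreal (L (a + 2 * l) z)" if "z \<ge> 0" for z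
    using finite that assms by simp_all
  have L_nonneg: "L p z \<ge> 0" for p z
    by (simp add: L_def)
  have "0 \<le> z2"
    using assms by simp
  have "ennreal (L a z2) * ennreal (L (a + 2 * l) z2) * (ennreal (L (a + l) z1))\<^sup>2
      < ennreal (L a z1) * ennreal (L (a + 2 * l) z1) * (ennreal (L (a + l) z2))\<^sup>2"
    using Psi_laplace_ratio_strict_antimono[OF \<open>b < 0\<close> \<open>l > 0\<close> \<open>z1 < z2\<close>, of a]
    unfolding L_finite[OF \<open>0 \<le> z1\<close>] L_finite[OF \<open>0 \<le> z2\<close>]
    by (simp add: L_nonneg ennreal_power ennreal_mult_eq_top_iff)
  then have "L a z2 * L (a + 2 * l) z2 * (L (a + l) z1)\<^sup>2 < L a z1 * L (a + 2 * l) z1 * (L (a + l) z2)\<^sup>2"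
    by (simp add: L_nonneg ennreal_power ennreal_mult[symmetric] ennreal_less_iff)
  then have "L a z2 * L (a + 2 * l) z2 / (L (a + l) z2)\<^sup>2 < L a z1 * L (a + 2 * l) z1 / (L (a + l) z1)\<^sup>2"
    using L_pos[of z1] L_pos[of z2] assms by (simp add: field_simps)
  moreover have "(Gamma (a + l))\<^sup>2 / (Gamma a * Gamma (a + 2 * l)) > 0"
    using assms by (intro divide_pos_pos mult_pos_pos zero_less_power Gamma_real_pos) simp_all
  ultimately show ?thesis
    unfolding ratio by (rule mult_strict_left_mono)
qed

theorem corollary10:
  fixes a l c :: real
  assumes "a > 0" and "l > 0" and "c < 1"
  defines "R \<equiv> (\<lambda>z. Psi a (c - 2*l) z * Psi (a + 2*l) c z / (Psi (a + l) (c - l) z)\<^sup>2)"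
  shows "(\<forall>z1 z2. 0 < z1 \<longrightarrow> z1 < z2 \<longrightarrow> R z2 < R z1) \<and>
         (\<forall>z>0. 1 < R z \<and>
                R z < Gamma (1 - c) * Gamma (1 - c + 2*l) / (Gamma (1 - c + l))\<^sup>2)"
proof -
  have R: "R = Psi_ratio a l c"
    by (simp add: R_def Psi_ratio_def fun_eq_iff)
  have decreasing: "R z2 < R z1" if "0 \<le> z1" "z1 < z2" for z1 z2
    unfolding R using Psi_ratio_strict_antimono assms(1-3) that by blast
  show ?thesis
  proof (intro conjI allI impI)
    fix z :: real
    assume "z > 0"
    \<comment> \<open>Cauchy-Schwarz alone gives only \<open>1 \<le> R\<close>; strictness comes from the strict decrease.\<close>
    show "1 < R z"
      using decreasing[of z "z + 1"] Psi_ratio_ge_one[OF assms(1-3), of "z + 1"] \<open>z > 0\<close>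
      unfolding R by simp
    show "R z < Gamma (1 - c) * Gamma (1 - c + 2*l) / (Gamma (1 - c + l))\<^sup>2"
      using decreasing[of 0 z] \<open>z > 0\<close> unfolding R Psi_ratio_zero[OF assms(1-3)] by simp
  qed (use decreasing in auto)
qed

end
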